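(* Let $K\neq0$. For all $A,P,B,Q\in\mathbb S^3_K$ with $A\neq P$ and $B\neq Q$, $|\operatorname{cosq}_K(\overrightarrow{AP},\overrightarrow{BQ})|\le1$.
   Context: $\mathbb S^3_K$ is the open hemisphere of radius $1/\sqrt K$ of the round 3-sphere if $K>0$, and 3-dimensional hyperbolic space of curvature $K$ if $K<0$, with intrinsic metric $\rho$. Let $\kappa=\sqrt{|K|}$. For $A\neq P$, $B\neq Q$ put $x=\rho(A,P)$, $y=\rho(B,Q)$, $a=\rho(A,B)$, $b=\rho(P,Q)$, $d=\rho(P,B)$, $f=\rho(A,Q)$; for $K>0$ $$\operatorname{cosq}_K(\overrightarrow{AP},\overrightarrow{BQ})=\frac{\cos\kappa b+\cos\kappa x\cos\kappa y}{\sin\kappa x\sin\kappa y}-\frac{(\cos\kappa x+\cos\kappa d)(\cos\kappa y+\cos\kappa f)}{(1+\cos\kappa a)\sin\kappa x\sin\kappa y},$$ and for $K<0$ $$\operatorname{cosq}_K(\overrightarrow{AP},\overrightarrow{BQ})=\frac{(\cosh\kappa x+\cosh\kappa d)(\cosh\kappa y+\cosh\kappa f)}{(1+\cosh\kappa a)\sinh\kappa x\sinh\kappa y}-\frac{\cosh\kappa b+\cosh\kappa x\cosh\kappa y}{\sinh\kappa x\sinh\kappa y}.$$ *)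

theory Defs
  imports "HOL-Analysis.Analysis"
begin

text \<open>Model space S^3_K embedded in R^4.
  K > 0: the open hemisphere {x. |x|^2 = 1/K, x_4 > 0} of the round sphere of radius 1/sqrt K,
         with intrinsic (great-circle) distance arccos(K <x,y>)/sqrt K.
  K < 0: the hyperboloid model {x. <x,x>_M = 1/K, x_1 > 0} with Minkowski form
         <x,y>_M = -x_1 y_1 + x_2 y_2 + x_3 y_3 + x_4 y_4 and intrinsic distance
         arcosh(K <x,y>_M)/sqrt(-K); this is hyperbolic 3-space of curvature K.\<close>

definition minkowski :: "real^4 \<Rightarrow> real^4 \<Rightarrow> real" where
  "minkowski x y = - (x$1 * y$1) + x$2 * y$2 + x$3 * y$3 + x$4 * y$4"

definition S3 :: "real \<Rightarrow> (real^4) set" where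
  "S3 K = (if K > 0 then {x. x \<bullet> x = 1 / K \<and> x$4 > 0}
           else {x. minkowski x x = 1 / K \<and> x$1 > 0})"

definition rhoK :: "real \<Rightarrow> real^4 \<Rightarrow> real^4 \<Rightarrow> real" where
  "rhoK K x y = (if K > 0 then arccos (K * (x \<bullet> y)) / sqrt K
                 else arcosh (K * minkowski x y) / sqrt (- K))"

definition cosq :: "real \<Rightarrow> real^4 \<Rightarrow> real^4 \<Rightarrow> real^4 \<Rightarrow> real^4 \<Rightarrow> real" where
  "cosq K A P B Q =
    (let k = sqrt \<bar>K\<bar>;
         x = rhoK K A P; y = rhoK K B Q; a = rhoK K A B;
         b = rhoK K P Q; d = rhoK K P B; f = rhoK K A Q
     in if K > 0 then
          (cos (k*b) + cos (k*x) * cos (k*y)) / (sin (k*x) * sin (k*y))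
          - ((cos (k*x) + cos (k*d)) * (cos (k*y) + cos (k*f)))
             / ((1 + cos (k*a)) * sin (k*x) * sin (k*y))
        else
          ((cosh (k*x) + cosh (k*d)) * (cosh (k*y) + cosh (k*f)))
             / ((1 + cosh (k*a)) * sinh (k*x) * sinh (k*y))
          - (cosh (k*b) + cosh (k*x) * cosh (k*y)) / (sinh (k*x) * sinh (k*y)))"

end

theory Submission
  imports Defs
begin

text \<open>After rescaling by \<open>sqrt \<bar>K\<bar>\<close>, the points lie on the unit quadric \<open>{x. g x x = e}\<close> of a
  symmetric bilinear form: \<open>g = inner\<close>, \<open>e = 1\<close> for \<open>K > 0\<close> and \<open>g = minkowski\<close>, \<open>e = -1\<close> for
  \<open>K < 0\<close>. There \<open>cosq\<close> is the cosine of the angle between the initial velocity of the geodesic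
  from \<open>B\<close> to \<open>Q\<close> and the parallel transport, along the geodesic from \<open>A\<close> to \<open>B\<close>, of the
  initial velocity of the geodesic from \<open>A\<close> to \<open>P\<close>. Both vectors are \<open>g\<close>-orthogonal to \<open>B\<close>,
  where \<open>g\<close> is positive definite, and transport preserves \<open>g\<close>-lengths, so the bound is the
  Cauchy--Schwarz inequality.\<close>

locale quadric_form =
  fixes g :: "'a::real_vector \<Rightarrow> 'a \<Rightarrow> real" and e :: real
  assumes bilinear: "bilinear g"
    and commute: "g x y = g y x"
    and sign_square: "e * e = 1"
begin

lemmas form_simps =
  bilinear_ladd[OF bilinear] bilinear_radd[OF bilinear]
  bilinear_lsub[OF bilinear] bilinear_rsub[OF bilinear]
  bilinear_lmul[OF bilinear] bilinear_rmul[OF bilinear]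

lemma sign_cancel: "e * (e * z) = z"
  using sign_square by (simp add: mult.assoc[symmetric])

definition positive_definite_on_orth :: "'a \<Rightarrow> bool" where
  "positive_definite_on_orth v \<longleftrightarrow> (\<forall>w. g w v = 0 \<longrightarrow> 0 \<le> g w w \<and> (g w w = 0 \<longrightarrow> w = 0))"

lemma orth_square_nonneg: "positive_definite_on_orth v \<Longrightarrow> g w v = 0 \<Longrightarrow> 0 \<le> g w w"
  by (simp add: positive_definite_on_orth_def)

lemma orth_square_eq_0: "positive_definite_on_orth v \<Longrightarrow> g w v = 0 \<Longrightarrow> g w w = 0 \<Longrightarrow> w = 0"
  by (simp add: positive_definite_on_orth_def)

text \<open>\<open>tangent u p\<close> is the initial velocity of the geodesic from \<open>u\<close> towards \<open>p\<close> (up to a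
  positive factor), and \<open>transport u v\<close> is parallel transport from \<open>T\<^sub>u\<close> to \<open>T\<^sub>v\<close> along the
  geodesic joining them.\<close>

definition tangent :: "'a \<Rightarrow> 'a \<Rightarrow> 'a" where
  "tangent u p = p - (e * g u p) *\<^sub>R u"

definition transport :: "'a \<Rightarrow> 'a \<Rightarrow> 'a \<Rightarrow> 'a" where
  "transport u v w = w - (e * g v w / (1 + e * g u v)) *\<^sub>R (u + v)"

lemma tangent_orth: "g u u = e \<Longrightarrow> g (tangent u p) u = 0"
  using sign_square by (simp add: tangent_def form_simps commute[of p u])

lemma tangent_square:
  "g u u = e \<Longrightarrow> g p p = e \<Longrightarrow> g (tangent u p) (tangent u p) = e * (1 - (g u p)\<^sup>2)"
  using sign_square
  by (simp add: tangent_def form_simps commute[of p u] power2_eq_square algebra_simps)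

lemma transport_orth:
  assumes "g u u = e" "g v v = e" "1 + e * g u v \<noteq> 0" "g w u = 0"
  shows "g (transport u v w) v = 0"
proof -
  have "g (u + v) v = e * (1 + e * g u v)"
    using assms by (simp add: form_simps algebra_simps sign_cancel)
  then have "g (transport u v w) v = g w v - e * g v w / (1 + e * g u v) * (e * (1 + e * g u v))"
    by (simp add: transport_def bilinear_lsub[OF bilinear] bilinear_lmul[OF bilinear])
  also have "\<dots> = 0"
    using assms(3) sign_square by (simp add: commute[of v w] sign_cancel)
  finally show ?thesis .
qed

lemma transport_square:
  assumes "g u u = e" "g v v = e" "1 + e * g u v \<noteq> 0" "g w u = 0"
  shows "g (transport u v w) (transport u v w) = g w w"
proof -
  define c where "c = e * g v w / (1 + e * g u v)"
  have uv: "g (u + v) (u + v) = 2 * e * (1 + e * g u v)"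
    using assms sign_square by (simp add: form_simps commute[of v u] algebra_simps)
  have uvw: "g (u + v) w = g v w" "g w (u + v) = g v w"
    using assms by (simp_all add: form_simps commute[of u w] commute[of v w])
  have c: "c * (1 + e * g u v) = e * g v w"
    using assms(3) by (simp add: c_def)
  have "g (transport u v w) (transport u v w)
      = g w w - 2 * c * g v w + c * e * (2 * (c * (1 + e * g u v)))"
    unfolding transport_def c_def[symmetric]
    by (simp only: bilinear_lsub[OF bilinear] bilinear_rsub[OF bilinear]
        bilinear_lmul[OF bilinear] bilinear_rmul[OF bilinear] uv uvw real_scaleR_def)
      (simp add: algebra_simps)
  also have "\<dots> = g w w"
    unfolding c by (simp add: algebra_simps sign_cancel)
  finally show ?thesis .
qed

lemma transport_tangent:
  assumes "g u u = e" "g v v = e" "1 + e * g u v \<noteq> 0"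
  shows "(1 + e * g u v) * g (transport u v (tangent u p)) (tangent v q)
    = (g p q + e * g u p * g v q) * (1 + e * g u v) - e * (g u p + g p v) * (g v q + g u q)"
proof -
  have w1w2: "g (tangent u p) (tangent v q)
      = g p q - e * g v q * g p v - e * g u p * g u q + e * e * g u p * g v q * g u v"
    by (simp add: tangent_def form_simps commute[of v u] commute[of q u] commute[of v p]
        algebra_simps)
  have t: "g v (tangent u p) = g p v - e * g u p * g u v"
    by (simp add: tangent_def form_simps commute[of v p] commute[of v u])
  have uvw2: "g (u + v) (tangent v q) = g u q + g v q - e * g v q * (g u v + e)"
    using assms by (simp add: tangent_def form_simps algebra_simps)
  have "g (transport u v (tangent u p)) (tangent v q)
      = g (tangent u p) (tangent v q)
        - e * g v (tangent u p) / (1 + e * g u v) * g (u + v) (tangent v q)"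
    by (simp add: transport_def bilinear_lsub[OF bilinear] bilinear_lmul[OF bilinear])
  then have "(1 + e * g u v) * g (transport u v (tangent u p)) (tangent v q)
      = (1 + e * g u v) * g (tangent u p) (tangent v q)
        - e * g v (tangent u p) * g (u + v) (tangent v q)"
    using assms(3) by (simp add: field_simps)
  then show ?thesis
    using sign_square unfolding w1w2 t uvw2 by algebra
qed

lemma cauchy_schwarz_orth:
  assumes "positive_definite_on_orth v" "g z v = 0" "g w v = 0" "0 < g w w"
  shows "(g z w)\<^sup>2 \<le> g z z * g w w"
proof -
  define s where "s = g z w / g w w"
  have "g (z - s *\<^sub>R w) v = 0"
    using assms(2,3) by (simp add: form_simps)
  then have "0 \<le> g (z - s *\<^sub>R w) (z - s *\<^sub>R w)"
    by (rule orth_square_nonneg[OF assms(1)])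
  also have "\<dots> = g z z - (g z w)\<^sup>2 / g w w"
    using assms(4) by (simp add: s_def form_simps commute[of w z] power2_eq_square field_simps)
  finally show ?thesis
    using assms(4) by (simp add: field_simps)
qed

lemma unit_cauchy_schwarz:
  assumes "positive_definite_on_orth u" "g u u = e" "g p p = e"
  shows "0 \<le> e * (1 - (g u p)\<^sup>2)"
    and "e * (1 - (g u p)\<^sup>2) = 0 \<Longrightarrow> p = u \<or> p = - u"
proof -
  define c where "c = e * g u p"
  have t: "g (tangent u p) u = 0" "g (tangent u p) (tangent u p) = e * (1 - (g u p)\<^sup>2)"
    using assms tangent_orth tangent_square by auto
  then show "0 \<le> e * (1 - (g u p)\<^sup>2)"
    using orth_square_nonneg[OF assms(1) t(1)] t(2) by simp
  assume "e * (1 - (g u p)\<^sup>2) = 0"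
  then have "tangent u p = 0"
    using orth_square_eq_0[OF assms(1)] t by simp
  then have p: "p = c *\<^sub>R u"
    by (simp add: tangent_def c_def)
  then have "c * c * e = e"
    using assms(2,3) by (simp add: form_simps)
  then have "c * c * (e * e) = e * e"
    by (simp add: mult.assoc[symmetric])
  then have "c * c = 1"
    using sign_square by simp
  then show "p = u \<or> p = - u"
    using p by (auto simp: square_eq_1_iff)
qed

lemma abs_transport_cosine_le_1:
  assumes "g u u = e" "g p p = e" "g v v = e" "g q q = e" "1 + e * g u v \<noteq> 0"
    and "positive_definite_on_orth v"
    and "0 < e * (1 - (g u p)\<^sup>2)" "0 < e * (1 - (g v q)\<^sup>2)"
  defines "sx \<equiv> sqrt (e * (1 - (g u p)\<^sup>2))" and "sy \<equiv> sqrt (e * (1 - (g v q)\<^sup>2))"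
  shows "\<bar>(g p q + e * g u p * g v q) / (sx * sy)
          - e * (g u p + g p v) * (g v q + g u q) / ((1 + e * g u v) * sx * sy)\<bar> \<le> 1"
proof -
  define z where "z = transport u v (tangent u p)"
  define w where "w = tangent v q"
  have "0 < sx" "0 < sy"
    using assms(7,8) by (simp_all add: sx_def sy_def)
  have "g z v = 0" "g z z = sx\<^sup>2"
    using assms tangent_orth tangent_square transport_orth transport_square
    by (simp_all add: z_def sx_def)
  moreover have "g w v = 0" "g w w = sy\<^sup>2"
    using assms tangent_orth tangent_square by (simp_all add: w_def sy_def)
  ultimately have "(g z w)\<^sup>2 \<le> (sx * sy)\<^sup>2"
    using cauchy_schwarz_orth[OF assms(6), of z w] \<open>0 < sy\<close> by (simp add: power_mult_distrib)
  then have "\<bar>g z w\<bar> \<le> sx * sy"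
    using \<open>0 < sx\<close> \<open>0 < sy\<close> by (simp add: abs_le_square_iff[symmetric])
  then have "\<bar>g z w / (sx * sy)\<bar> \<le> 1"
    using \<open>0 < sx\<close> \<open>0 < sy\<close> by (simp add: abs_divide pos_divide_le_eq)
  moreover have "(g p q + e * g u p * g v q) / (sx * sy)
          - e * (g u p + g p v) * (g v q + g u q) / ((1 + e * g u v) * sx * sy)
        = ((g p q + e * g u p * g v q) * (1 + e * g u v)
            - e * (g u p + g p v) * (g v q + g u q)) / ((1 + e * g u v) * (sx * sy))"
    using assms(5) by (simp add: diff_divide_distrib mult.assoc)
  ultimately show ?thesis
    using assms(5) by (simp add: transport_tangent[OF assms(1,3,5), symmetric] z_def w_def)
qed

end

interpretation spherical: quadric_form inner 1
  by unfold_locales (auto simp: bilinear_def linear_iff inner_add inner_commute)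

lemma spherical_positive_definite_on_orth: "spherical.positive_definite_on_orth v"
  by (simp add: spherical.positive_definite_on_orth_def)

lemma minkowski_bilinear: "bilinear minkowski"
  by (auto simp: bilinear_def linear_iff minkowski_def algebra_simps)

interpretation hyperbolic: quadric_form minkowski "-1"
  by unfold_locales (auto simp: minkowski_bilinear minkowski_def algebra_simps)

definition spatial :: "real^4 \<Rightarrow> real^4" where
  "spatial x = (\<chi> i. if i = 1 then 0 else x $ i)"

lemma minkowski_eq_spatial: "minkowski x y = spatial x \<bullet> spatial y - x$1 * y$1"
  by (simp add: minkowski_def spatial_def inner_vec_def sum_4)

lemma spatial_eq_0_iff: "spatial x = 0 \<longleftrightarrow> (\<forall>i. i \<noteq> 1 \<longrightarrow> x $ i = 0)"
  by (auto simp: spatial_def vec_eq_iff)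

lemma minkowski_positive_definite_on_orth:
  assumes "minkowski v v < 0"
  shows "hyperbolic.positive_definite_on_orth v"
  unfolding hyperbolic.positive_definite_on_orth_def
proof (intro allI impI)
  fix w assume "minkowski w v = 0"
  then have "spatial w \<bullet> spatial v = w$1 * v$1"
    by (simp add: minkowski_eq_spatial)
  then have cs: "(w$1)\<^sup>2 * (v$1)\<^sup>2 \<le> (spatial w \<bullet> spatial w) * (spatial v \<bullet> spatial v)"
    using Cauchy_Schwarz_ineq[of "spatial w" "spatial v"] by (simp add: power_mult_distrib)
  have v: "spatial v \<bullet> spatial v < (v$1)\<^sup>2"
    using assms by (simp add: minkowski_eq_spatial power2_eq_square)
  have v1: "0 < (v$1)\<^sup>2"
    using v inner_ge_zero[of "spatial v"] by linarith
  show "0 \<le> minkowski w w \<and> (minkowski w w = 0 \<longrightarrow> w = 0)"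
  proof (cases "spatial w = 0")
    case True
    then have "w$1 = 0"
      using cs v1 by (simp add: mult_le_0_iff)
    then have "w$i = 0" for i
      using True by (cases "i = 1") (auto simp: spatial_eq_0_iff)
    then have "w = 0"
      by (simp add: vec_eq_iff)
    then show ?thesis
      by (simp add: minkowski_def)
  next
    case False
    then have "(spatial w \<bullet> spatial w) * (spatial v \<bullet> spatial v) < (spatial w \<bullet> spatial w) * (v$1)\<^sup>2"
      using v by (intro mult_strict_left_mono) auto
    with cs have "(w$1)\<^sup>2 * (v$1)\<^sup>2 < (spatial w \<bullet> spatial w) * (v$1)\<^sup>2"
      by linarith
    then have "(w$1)\<^sup>2 < spatial w \<bullet> spatial w"
      using v1 by simp
    then show ?thesis
      by (simp add: minkowski_eq_spatial power2_eq_square)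
  qed
qed

lemma minkowski_same_sheet_neg:
  assumes "minkowski u u < 0" "minkowski p p < 0" "0 < u$1" "0 < p$1"
  shows "minkowski u p < 0"
proof -
  have "norm (spatial x) < x$1" if "minkowski x x < 0" "0 < x$1" for x
  proof (rule power2_less_imp_less)
    show "(norm (spatial x))\<^sup>2 < (x$1)\<^sup>2"
      using that(1) by (simp add: power2_norm_eq_inner minkowski_eq_spatial power2_eq_square[of "x$1"])
  qed (use that(2) in simp)
  then have "norm (spatial u) * norm (spatial p) < u$1 * p$1"
    using assms by (auto intro: mult_strict_mono)
  then show ?thesis
    using norm_cauchy_schwarz[of "spatial u" "spatial p"] by (simp add: minkowski_eq_spatial)
qed

definition hemisphere :: "(real^4) set" where
  "hemisphere = {x. x \<bullet> x = 1 \<and> 0 < x$4}"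

definition hyperboloid :: "(real^4) set" where
  "hyperboloid = {x. minkowski x x = -1 \<and> 0 < x$1}"

lemma hemisphere_inner_bounds:
  assumes "u \<in> hemisphere" "p \<in> hemisphere"
  shows "-1 < u \<bullet> p" "u \<bullet> p \<le> 1" "u \<noteq> p \<Longrightarrow> u \<bullet> p < 1"
proof -
  have uu: "u \<bullet> u = 1" and pp: "p \<bullet> p = 1" and "p \<noteq> - u"
    using assms by (auto simp: hemisphere_def)
  then have le: "\<bar>u \<bullet> p\<bar> \<le> 1" and eq: "\<bar>u \<bullet> p\<bar> = 1 \<Longrightarrow> p = u"
    using spherical.unit_cauchy_schwarz[OF spherical_positive_definite_on_orth uu pp]
    by (auto simp: abs_square_le_1 abs_square_eq_1)
  moreover have "u \<bullet> p \<noteq> -1"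
    using eq uu by force
  ultimately show "-1 < u \<bullet> p" "u \<bullet> p \<le> 1"
    unfolding less_le by (auto simp: abs_le_iff)
  show "u \<bullet> p < 1" if "u \<noteq> p"
    unfolding less_le using le eq that by (auto simp: abs_le_iff)
qed

lemma hyperboloid_minkowski_bounds:
  assumes "u \<in> hyperboloid" "p \<in> hyperboloid"
  shows "minkowski u p \<le> -1" "u \<noteq> p \<Longrightarrow> minkowski u p < -1"
proof -
  have uu: "minkowski u u = -1" and pp: "minkowski p p = -1" and "p \<noteq> - u"
    and neg: "minkowski u p < 0"
    using assms minkowski_same_sheet_neg by (auto simp: hyperboloid_def)
  then have ge: "1 \<le> (minkowski u p)\<^sup>2" and eq: "(minkowski u p)\<^sup>2 = 1 \<Longrightarrow> p = u"
    using hyperbolic.unit_cauchy_schwarz[OF minkowski_positive_definite_on_orth uu pp] by auto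
  show le: "minkowski u p \<le> -1"
    using ge neg abs_le_square_iff[of 1 "minkowski u p"] by auto
  show "minkowski u p < -1" if "u \<noteq> p"
    unfolding less_le using le eq that by (auto simp: power2_eq_1_iff)
qed

lemma S3_pos_iff:
  assumes "0 < K"
  shows "X \<in> S3 K \<longleftrightarrow> sqrt K *\<^sub>R X \<in> hemisphere"
proof -
  have "X \<bullet> X = 1 / K \<longleftrightarrow> K * (X \<bullet> X) = 1"
    using assms by (auto simp: field_simps)
  then show ?thesis
    using assms by (simp add: S3_def hemisphere_def zero_less_mult_iff mult.assoc[symmetric])
qed

lemma sqrt_mult_rhoK_pos:
  assumes "0 < K"
  shows "sqrt K * rhoK K X Y = arccos ((sqrt K *\<^sub>R X) \<bullet> (sqrt K *\<^sub>R Y))"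
  using assms by (simp add: rhoK_def mult.assoc[symmetric])

lemma S3_neg_iff:
  assumes "K < 0"
  shows "X \<in> S3 K \<longleftrightarrow> sqrt (- K) *\<^sub>R X \<in> hyperboloid"
proof -
  have "minkowski X X = 1 / K \<longleftrightarrow> - K * minkowski X X = -1"
    using assms by (auto simp: field_simps)
  then show ?thesis
    using assms
    by (simp add: S3_def hyperboloid_def hyperbolic.form_simps zero_less_mult_iff mult.assoc[symmetric])
qed

lemma sqrt_mult_rhoK_neg:
  assumes "K < 0"
  shows "sqrt (- K) * rhoK K X Y = arcosh (- minkowski (sqrt (- K) *\<^sub>R X) (sqrt (- K) *\<^sub>R Y))"
  using assms by (simp add: rhoK_def hyperbolic.form_simps mult.assoc[symmetric])

lemma abs_cosq_le_1_pos:
  assumes "0 < K" "A \<in> S3 K" "P \<in> S3 K" "B \<in> S3 K" "Q \<in> S3 K" "A \<noteq> P" "B \<noteq> Q"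
  shows "\<bar>cosq K A P B Q\<bar> \<le> 1"
proof -
  define u where "u = sqrt K *\<^sub>R A"
  define p where "p = sqrt K *\<^sub>R P"
  define v where "v = sqrt K *\<^sub>R B"
  define q where "q = sqrt K *\<^sub>R Q"
  have mem: "u \<in> hemisphere" "p \<in> hemisphere" "v \<in> hemisphere" "q \<in> hemisphere"
    using assms S3_pos_iff by (simp_all add: u_def p_def v_def q_def)
  then have unit: "u \<bullet> u = 1" "p \<bullet> p = 1" "v \<bullet> v = 1" "q \<bullet> q = 1"
    by (simp_all add: hemisphere_def)
  have "u \<noteq> p" "v \<noteq> q"
    using assms by (simp_all add: u_def p_def v_def q_def)
  then have "\<bar>u \<bullet> p\<bar> < 1" "\<bar>v \<bullet> q\<bar> < 1"
    using hemisphere_inner_bounds mem by (auto simp: abs_less_iff)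
  have "-1 < u \<bullet> v" "-1 < p \<bullet> q" "-1 < p \<bullet> v" "-1 < u \<bullet> q"
    "u \<bullet> v \<le> 1" "p \<bullet> q \<le> 1" "p \<bullet> v \<le> 1" "u \<bullet> q \<le> 1"
    using hemisphere_inner_bounds mem by auto
  then have "cosq K A P B Q
      = (p \<bullet> q + 1 * (u \<bullet> p) * (v \<bullet> q))
          / (sqrt (1 * (1 - (u \<bullet> p)\<^sup>2)) * sqrt (1 * (1 - (v \<bullet> q)\<^sup>2)))
        - 1 * (u \<bullet> p + p \<bullet> v) * (v \<bullet> q + u \<bullet> q)
          / ((1 + 1 * (u \<bullet> v)) * sqrt (1 * (1 - (u \<bullet> p)\<^sup>2)) * sqrt (1 * (1 - (v \<bullet> q)\<^sup>2)))"
    unfolding cosq_def Let_def abs_of_pos[OF assms(1)] sqrt_mult_rhoK_pos[OF assms(1)]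
      u_def[symmetric] p_def[symmetric] v_def[symmetric] q_def[symmetric]
    using \<open>\<bar>u \<bullet> p\<bar> < 1\<close> \<open>\<bar>v \<bullet> q\<bar> < 1\<close> assms(1)
    by (simp add: sin_arccos_abs less_imp_le inner_commute[of v p])
  also have "\<bar>\<dots>\<bar> \<le> 1"
    using \<open>\<bar>u \<bullet> p\<bar> < 1\<close> \<open>\<bar>v \<bullet> q\<bar> < 1\<close> \<open>-1 < u \<bullet> v\<close>
    by (intro spherical.abs_transport_cosine_le_1 spherical_positive_definite_on_orth unit)
      (simp_all add: abs_square_less_1)
  finally show ?thesis .
qed

lemma abs_cosq_le_1_neg:
  assumes "K < 0" "A \<in> S3 K" "P \<in> S3 K" "B \<in> S3 K" "Q \<in> S3 K" "A \<noteq> P" "B \<noteq> Q"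
  shows "\<bar>cosq K A P B Q\<bar> \<le> 1"
proof -
  define u where "u = sqrt (- K) *\<^sub>R A"
  define p where "p = sqrt (- K) *\<^sub>R P"
  define v where "v = sqrt (- K) *\<^sub>R B"
  define q where "q = sqrt (- K) *\<^sub>R Q"
  have mem: "u \<in> hyperboloid" "p \<in> hyperboloid" "v \<in> hyperboloid" "q \<in> hyperboloid"
    using assms S3_neg_iff by (simp_all add: u_def p_def v_def q_def)
  then have unit: "minkowski u u = -1" "minkowski p p = -1" "minkowski v v = -1" "minkowski q q = -1"
    by (simp_all add: hyperboloid_def)
  have "u \<noteq> p" "v \<noteq> q"
    using assms by (simp_all add: u_def p_def v_def q_def)
  then have "minkowski u p < -1" "minkowski v q < -1"
    using hyperboloid_minkowski_bounds mem by auto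
  have "minkowski u v \<le> -1" "minkowski p q \<le> -1" "minkowski p v \<le> -1" "minkowski u q \<le> -1"
    using hyperboloid_minkowski_bounds mem by auto
  then have "cosq K A P B Q
      = (minkowski p q + -1 * minkowski u p * minkowski v q)
          / (sqrt (-1 * (1 - (minkowski u p)\<^sup>2)) * sqrt (-1 * (1 - (minkowski v q)\<^sup>2)))
        - -1 * (minkowski u p + minkowski p v) * (minkowski v q + minkowski u q)
          / ((1 + -1 * minkowski u v) * sqrt (-1 * (1 - (minkowski u p)\<^sup>2))
             * sqrt (-1 * (1 - (minkowski v q)\<^sup>2)))"
    unfolding cosq_def Let_def abs_of_neg[OF assms(1)] sqrt_mult_rhoK_neg[OF assms(1)]
      u_def[symmetric] p_def[symmetric] v_def[symmetric] q_def[symmetric]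
    using \<open>minkowski u p < -1\<close> \<open>minkowski v q < -1\<close> assms(1)
    by (simp add: sinh_arcosh_real hyperbolic.commute[of v p] algebra_simps
        diff_divide_distrib add_divide_distrib)
  also have "\<bar>\<dots>\<bar> \<le> 1"
    using \<open>minkowski u p < -1\<close> \<open>minkowski v q < -1\<close> \<open>minkowski u v \<le> -1\<close>
    by (intro hyperbolic.abs_transport_cosine_le_1 minkowski_positive_definite_on_orth unit)
      (simp_all add: unit abs_square_le_1 abs_le_iff flip: not_le)
  finally show ?thesis .
qed

theorem corollary3p3:
  fixes K :: real and A P B Q :: "real^4"
  assumes "K \<noteq> 0"
    and "A \<in> S3 K" "P \<in> S3 K" "B \<in> S3 K" "Q \<in> S3 K"
    and "A \<noteq> P" "B \<noteq> Q"
  shows "\<bar>cosq K A P B Q\<bar> \<le> 1"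
  using assms abs_cosq_le_1_pos abs_cosq_le_1_neg by (cases "0 < K") auto

end
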